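(* Let $n\ge 2$ be an integer. The Heyting algebra $\mathbb{X}_n^{\ast}$ is infinite and $(n+1)$-generated. Consequently, the variety $\mathbb{V}(\mathbb{X}_n^\ast)$ generated by $\mathbb{X}_n^\ast$ is not locally finite.
   Context: $\mathbb{N}=\{0,1,2,\dots\}$. Fix an integer $n\ge 2$ and put $N=2^{n+1}-1$. Let $T_n$ be the set of triples $\langle k_1,k_2,k_3\rangle$ of pairwise distinct natural numbers $\le N$, with a fixed enumeration $T_n=\{s_0,\dots,s_t\}$. Let $U_n$ be a set of pairwise distinct elements $a_m,b_m$ ($m\in\mathbb{N}$) and $c_{m,k},d_{m,k},e^a_{m,k},e^b_{m,k}$ ($m\in\mathbb{N}$, $0\le k\le N$). Define $x\prec y$ on $U_n$ iff one of: (1) $x=a_m$ and $y\in\{c_{m,k_1},c_{m,k_2}\}$, where $s_j=\langle k_1,k_2,k_3\rangle$ with $j\equiv m \bmod (t+1)$; (2) $x=b_m$ and $y\in\{c_{m,k_1},c_{m,k_3}\}$, with $s_j$ as in (1); (3) $m\ge1$, $x=c_{m,k}$, and either $y=e^a_{m-1,j}$ with $j\ne k$, or $y=e^b_{m-1,i}$ for any $i\le N$; (4) $x=d_{m,k}$ and $y=c_{m,j}$ with $j\neq k$; (5) $x=e^a_{m,k}$ and either $y=a_m$ or $y=d_{m,j}$ with $j\ne k$; (6) $x=e^b_{m,k}$ and either $y=b_m$ or $y=d_{m,j}$ with $j\ne k$. Let $\le$ be the reflexive transitive closure of $\prec$. The $n$-abomination $\mathbb{X}_n$ is the poset $U_n\cup\{\bot\}$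 where $\bot$ is a new least element, with the topology in which $U$ is open iff $\bot\notin U$ or $U$ is cofinite; it is an Esakia space. $\mathbb{X}_n^\ast$ denotes its Esakia dual, the Heyting algebra of clopen upsets of $\mathbb{X}_n$ (with intersection, union, $0=\emptyset$, $1=X_n$, and $U\to V = X_n\setminus{\downarrow}(U\setminus V)$). A variety is locally finite if its finitely generated members are finite. *)

theory Defs
  imports Main
begin

record 'a halg =
  hcar  :: "'a set"
  hmeet :: "'a \<Rightarrow> 'a \<Rightarrow> 'a"
  hjoin :: "'a \<Rightarrow> 'a \<Rightarrow> 'a"
  himp  :: "'a \<Rightarrow> 'a \<Rightarrow> 'a"
  hbot  :: 'a
  htop  :: 'a

datatype hterm = TVar nat | TBot | TTop | TMeet hterm hterm | TJoin hterm hterm | TImp hterm hterm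

fun heval :: "'a halg \<Rightarrow> (nat \<Rightarrow> 'a) \<Rightarrow> hterm \<Rightarrow> 'a" where
  "heval A v (TVar i) = v i"
| "heval A v TBot = hbot A"
| "heval A v TTop = htop A"
| "heval A v (TMeet s t) = hmeet A (heval A v s) (heval A v t)"
| "heval A v (TJoin s t) = hjoin A (heval A v s) (heval A v t)"
| "heval A v (TImp s t) = himp A (heval A v s) (heval A v t)"

definition satisfies :: "'a halg \<Rightarrow> hterm \<Rightarrow> hterm \<Rightarrow> bool" where
  "satisfies A s t \<longleftrightarrow> (\<forall>v. (\<forall>i. v i \<in> hcar A) \<longrightarrow> heval A v s = heval A v t)"

definition is_alg :: "'a halg \<Rightarrow> bool" where
  "is_alg A \<longleftrightarrow> hcar A \<noteq> {} \<and> hbot A \<in> hcar A \<and> htop A \<in> hcar A \<and>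
     (\<forall>x\<in>hcar A. \<forall>y\<in>hcar A. hmeet A x y \<in> hcar A \<and> hjoin A x y \<in> hcar A \<and> himp A x y \<in> hcar A)"

text \<open>Membership in the variety generated by A, via Birkhoff's HSP theorem:
  algebras satisfying every identity valid in A.\<close>
definition in_variety :: "'a halg \<Rightarrow> 'b halg \<Rightarrow> bool" where
  "in_variety A B \<longleftrightarrow> is_alg B \<and> (\<forall>s t. satisfies A s t \<longrightarrow> satisfies B s t)"

inductive_set generated :: "'a halg \<Rightarrow> 'a set \<Rightarrow> 'a set" for A G where
  gen_base: "x \<in> G \<Longrightarrow> x \<in> generated A G"
| gen_bot: "hbot A \<in> generated A G"
| gen_top: "htop A \<in> generated A G"
| gen_meet: "x \<in> generated A G \<Longrightarrow> y \<in> generated A G \<Longrightarrow> hmeet A x y \<in> generated A G"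
| gen_join: "x \<in> generated A G \<Longrightarrow> y \<in> generated A G \<Longrightarrow> hjoin A x y \<in> generated A G"
| gen_imp: "x \<in> generated A G \<Longrightarrow> y \<in> generated A G \<Longrightarrow> himp A x y \<in> generated A G"

definition finitely_generated :: "'a halg \<Rightarrow> bool" where
  "finitely_generated A \<longleftrightarrow> (\<exists>G. finite G \<and> G \<subseteq> hcar A \<and> generated A G = hcar A)"

text \<open>Members are tested on the carrier type of A (sufficient when it is infinite, since
  finitely generated algebras are countable).\<close>
definition variety_locally_finite :: "'a halg \<Rightarrow> bool" where
  "variety_locally_finite A \<longleftrightarrow>
     (\<forall>B :: 'a halg. in_variety A B \<and> finitely_generated B \<longrightarrow> finite (hcar B))"

datatype pt = PBot | Pa nat | Pb nat | Pc nat nat | Pd nat nat | Pea nat nat | Peb nat nat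

definition NN :: "nat \<Rightarrow> nat" where "NN n = 2 ^ (n + 1) - 1"

definition Tn :: "nat \<Rightarrow> (nat \<times> nat \<times> nat) set" where
  "Tn n = {(k1, k2, k3). k1 \<le> NN n \<and> k2 \<le> NN n \<and> k3 \<le> NN n \<and> k1 \<noteq> k2 \<and> k1 \<noteq> k3 \<and> k2 \<noteq> k3}"

text \<open>The fixed enumeration s_0,...,s_t of T_n is a list s (t + 1 = length s).\<close>
definition sel :: "(nat \<times> nat \<times> nat) list \<Rightarrow> nat \<Rightarrow> nat \<times> nat \<times> nat" where
  "sel s m = s ! (m mod length s)"

definition Unn :: "nat \<Rightarrow> pt set" where
  "Unn n = range Pa \<union> range Pb \<union> {Pc m k | m k. k \<le> NN n} \<union> {Pd m k | m k. k \<le> NN n}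
          \<union> {Pea m k | m k. k \<le> NN n} \<union> {Peb m k | m k. k \<le> NN n}"

definition Xn :: "nat \<Rightarrow> pt set" where
  "Xn n = insert PBot (Unn n)"

definition prec :: "nat \<Rightarrow> (nat \<times> nat \<times> nat) list \<Rightarrow> pt \<Rightarrow> pt \<Rightarrow> bool" where
  "prec n s x y = (case x of
      Pa m \<Rightarrow> (case sel s m of (k1, k2, k3) \<Rightarrow> y = Pc m k1 \<or> y = Pc m k2)
    | Pb m \<Rightarrow> (case sel s m of (k1, k2, k3) \<Rightarrow> y = Pc m k1 \<or> y = Pc m k3)
    | Pc m k \<Rightarrow> k \<le> NN n \<and> 1 \<le> m \<and>
          ((\<exists>j \<le> NN n. j \<noteq> k \<and> y = Pea (m - 1) j) \<or> (\<exists>i \<le> NN n. y = Peb (m - 1) i))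
    | Pd m k \<Rightarrow> k \<le> NN n \<and> (\<exists>j \<le> NN n. j \<noteq> k \<and> y = Pc m j)
    | Pea m k \<Rightarrow> k \<le> NN n \<and> (y = Pa m \<or> (\<exists>j \<le> NN n. j \<noteq> k \<and> y = Pd m j))
    | Peb m k \<Rightarrow> k \<le> NN n \<and> (y = Pb m \<or> (\<exists>j \<le> NN n. j \<noteq> k \<and> y = Pd m j))
    | PBot \<Rightarrow> False)"

definition leX :: "nat \<Rightarrow> (nat \<times> nat \<times> nat) list \<Rightarrow> pt \<Rightarrow> pt \<Rightarrow> bool" where
  "leX n s x y \<longleftrightarrow> x \<in> Xn n \<and> y \<in> Xn n \<and> (x = PBot \<or> (prec n s)\<^sup>*\<^sup>* x y)"

definition openX :: "nat \<Rightarrow> pt set \<Rightarrow> bool" where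
  "openX n U \<longleftrightarrow> U \<subseteq> Xn n \<and> (PBot \<notin> U \<or> finite (Xn n - U))"

definition clopenX :: "nat \<Rightarrow> pt set \<Rightarrow> bool" where
  "clopenX n U \<longleftrightarrow> openX n U \<and> openX n (Xn n - U)"

definition upsetX :: "nat \<Rightarrow> (nat \<times> nat \<times> nat) list \<Rightarrow> pt set \<Rightarrow> bool" where
  "upsetX n s U \<longleftrightarrow> U \<subseteq> Xn n \<and> (\<forall>x\<in>U. \<forall>y. leX n s x y \<longrightarrow> y \<in> U)"

definition downX :: "nat \<Rightarrow> (nat \<times> nat \<times> nat) list \<Rightarrow> pt set \<Rightarrow> pt set" where
  "downX n s S = {x. \<exists>y\<in>S. leX n s x y}"

definition Xstar :: "nat \<Rightarrow> (nat \<times> nat \<times> nat) list \<Rightarrow> pt set halg" where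
  "Xstar n s = \<lparr> hcar = {U. clopenX n U \<and> upsetX n s U},
                 hmeet = (\<inter>), hjoin = (\<union>),
                 himp = (\<lambda>U V. Xn n - downX n s (U - V)),
                 hbot = {}, htop = Xn n \<rparr>"

end

theory Submission
  imports Defs
begin

(* The order of X_n is almost layered by levels m = 0, 1, ...: every point of level m + 1 lies
   below every point of level m, except that c_{m+1,k} is not below e^a_{m,k}.  So principal
   upsets are finite, the clopen upsets are X_n and the finite upsets of U_n, and the principal
   upsets of the infinitely many points of U_n are pairwise distinct elements of X_n^*.

   Take G_i = {c_{0,k} | bit i of k is set} for i <= n.  Intersecting, over all i, either G_i or
   its negation G_i -> 0 according to bit i of k cuts out the singleton {c_{0,k}}.  All other
   principal upsets are obtained by induction on a rank that strictly decreases upwards: for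
   every other point x there are w1, w2 of smaller rank such that x is the only point of rank
   >= rank x outside the down-sets of w1 and w2, whence
     up x = (X_n - down w1) \<inter> (X_n - down w2) \<inter> (R -> up x - {x}),
   with R the upset of all points of smaller rank and X_n - down w = up w -> up w - {w}.
   An infinite finitely generated algebra in its own variety refutes local finiteness. *)

fun level :: "pt \<Rightarrow> nat" where
  "level PBot = 0" | "level (Pa m) = m" | "level (Pb m) = m" | "level (Pc m k) = m"
| "level (Pd m k) = m" | "level (Pea m k) = m" | "level (Peb m k) = m"

fun rank :: "pt \<Rightarrow> nat" where
  "rank PBot = 0" | "rank (Pa m) = 4 * m + 1" | "rank (Pb m) = 4 * m + 1"
| "rank (Pc m k) = 4 * m" | "rank (Pd m k) = 4 * m + 2"
| "rank (Pea m k) = 4 * m + 3" | "rank (Peb m k) = 4 * m + 3"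

lemma rank_level_bounds: "4 * level z \<le> rank z" "rank z \<le> 4 * level z + 3"
  by (cases z; simp)+

lemma level_le_if_rank_le: "rank x \<le> rank z \<Longrightarrow> level x \<le> level z"
  using rank_level_bounds[of x] rank_level_bounds[of z] by linarith

lemma nat_eq_if_low_bits_eq:
  fixes j k :: nat
  assumes "j < 2 ^ m" "k < 2 ^ m" "\<And>i. i < m \<Longrightarrow> bit j i = bit k i"
  shows "j = k"
proof (rule bit_eqI)
  fix i
  have "take_bit m j = j" "take_bit m k = k"
    using assms(1,2) by (simp_all add: take_bit_nat_eq_self_iff)
  then show "bit j i = bit k i"
    using assms(3) by (metis bit_take_bit_iff)
qed

lemma exists_low_bit: "0 < (j :: nat) \<Longrightarrow> j < 2 ^ m \<Longrightarrow> \<exists>i<m. bit j i"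
  using nat_eq_if_low_bits_eq[of j m 0] by auto

lemma generated_subset_carrier:
  assumes "is_alg A" "G \<subseteq> hcar A"
  shows "generated A G \<subseteq> hcar A"
proof
  fix x assume "x \<in> generated A G"
  then show "x \<in> hcar A"
    by (induction rule: generated.induct) (use assms in \<open>auto simp: is_alg_def\<close>)
qed

locale abomination =
  fixes n :: nat and s :: "(nat \<times> nat \<times> nat) list"
  assumes n_pos: "1 \<le> n" and set_s: "set s = Tn n"
begin

abbreviation "N \<equiv> NN n"

lemma le_N_iff: "k \<le> N \<longleftrightarrow> k < 2 ^ Suc n"
proof -
  have "N = 2 ^ Suc n - 1" by (simp add: NN_def del: power_Suc)
  moreover have "(0::nat) < 2 ^ Suc n" by simp
  ultimately show ?thesis by linarith
qed

lemma pow_le_N: "i \<le> n \<Longrightarrow> 2 ^ i \<le> N"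
proof -
  assume "i \<le> n"
  then have "(2::nat) ^ i < 2 ^ Suc n" by (intro power_strict_increasing) auto
  then show ?thesis using le_N_iff by blast
qed

lemma three_le_N: "3 \<le> N"
proof -
  have "(2::nat) ^ 2 \<le> 2 ^ Suc n" using n_pos by (intro power_increasing) auto
  then show ?thesis by (simp add: NN_def)
qed

lemma fresh_index: "\<exists>j\<le>N. j \<noteq> a \<and> j \<noteq> b \<and> j \<noteq> c"
proof -
  have "\<exists>j::nat. j \<le> 3 \<and> j \<noteq> a \<and> j \<noteq> b \<and> j \<noteq> c" by presburger
  then show ?thesis using three_le_N by (meson le_trans)
qed

lemma sel_in_Tn: "sel s m \<in> Tn n"
proof -
  have "(0, 1, 2) \<in> Tn n" using three_le_N by (simp add: Tn_def)
  then have "s \<noteq> []" using set_s by auto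
  then show ?thesis using set_s unfolding sel_def by (metis length_greater_0_conv mod_less_divisor nth_mem)
qed

lemma sel_bounds:
  assumes "sel s m = (k1, k2, k3)"
  shows "k1 \<le> N \<and> k2 \<le> N \<and> k3 \<le> N \<and> k1 \<noteq> k2 \<and> k1 \<noteq> k3 \<and> k2 \<noteq> k3"
  using sel_in_Tn[of m] assms by (simp add: Tn_def)

fun in_U :: "pt \<Rightarrow> bool" where
  "in_U PBot = False" | "in_U (Pa m) = True" | "in_U (Pb m) = True"
| "in_U (Pc m k) = (k \<le> N)" | "in_U (Pd m k) = (k \<le> N)"
| "in_U (Pea m k) = (k \<le> N)" | "in_U (Peb m k) = (k \<le> N)"

lemma Xn_eq: "Xn n = insert PBot {z. in_U z}"
  unfolding Xn_def Unn_def by (auto elim: in_U.elims)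

lemma infinite_U: "infinite {z. in_U z}"
proof
  assume "finite {z. in_U z}"
  then have "finite (range Pa)" by (rule finite_subset[rotated]) auto
  then show False by (auto dest: finite_imageD simp: inj_def)
qed

lemma finite_rank_less: "finite {z. in_U z \<and> rank z < r}"
proof (rule finite_subset)
  let ?I = "{..<r} \<times> {..N}"
  show "{z. in_U z \<and> rank z < r} \<subseteq> Pa ` {..<r} \<union> Pb ` {..<r} \<union> case_prod Pc ` ?I
      \<union> case_prod Pd ` ?I \<union> case_prod Pea ` ?I \<union> case_prod Peb ` ?I"
  proof
    fix z assume "z \<in> {z. in_U z \<and> rank z < r}"
    then show "z \<in> Pa ` {..<r} \<union> Pb ` {..<r} \<union> case_prod Pc ` ?I
      \<union> case_prod Pd ` ?I \<union> case_prod Pea ` ?I \<union> case_prod Peb ` ?I"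
      by (cases z) force+
  qed
qed auto

section \<open>The order of X_n\<close>

definition same_level_le :: "pt \<Rightarrow> pt \<Rightarrow> bool" where
  "same_level_le x y = (case x of
     PBot \<Rightarrow> False
   | Pa m \<Rightarrow> (case sel s m of (k1, k2, k3) \<Rightarrow> y = Pa m \<or> y = Pc m k1 \<or> y = Pc m k2)
   | Pb m \<Rightarrow> (case sel s m of (k1, k2, k3) \<Rightarrow> y = Pb m \<or> y = Pc m k1 \<or> y = Pc m k3)
   | Pc m k \<Rightarrow> y = Pc m k
   | Pd m k \<Rightarrow> y = Pd m k \<or> (\<exists>j. j \<noteq> k \<and> y = Pc m j)
   | Pea m k \<Rightarrow> y = Pea m k \<or> y = Pa m \<or> (\<exists>j. j \<noteq> k \<and> y = Pd m j) \<or> (\<exists>j. y = Pc m j)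
   | Peb m k \<Rightarrow> y = Peb m k \<or> y = Pb m \<or> (\<exists>j. j \<noteq> k \<and> y = Pd m j) \<or> (\<exists>j. y = Pc m j))"

definition le_U :: "pt \<Rightarrow> pt \<Rightarrow> bool" where
  "le_U x y \<longleftrightarrow> in_U x \<and> in_U y \<and>
     (level y + 2 \<le> level x
      \<or> level x = level y + 1 \<and> \<not> (\<exists>k. x = Pc (level x) k \<and> y = Pea (level y) k)
      \<or> level x = level y \<and> same_level_le x y)"

lemma le_U_in_U: "le_U x y \<Longrightarrow> in_U x \<and> in_U y"
  by (simp add: le_U_def)

lemma prec_in_U: "prec n s x y \<Longrightarrow> in_U x \<and> in_U y"
  unfolding prec_def by (auto split: pt.splits prod.splits dest: sel_bounds)

lemma le_U_refl: "in_U x \<Longrightarrow> le_U x x"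
  unfolding le_U_def same_level_le_def by (cases x) (auto split: prod.splits)

lemma le_U_prec_trans: "prec n s x y \<Longrightarrow> le_U y z \<Longrightarrow> le_U x z"
  unfolding prec_def
  by (cases x; (auto split: prod.splits dest: sel_bounds);
      auto simp: le_U_def same_level_le_def split: prod.splits dest: sel_bounds)

lemma le_U_if_rtranclp: "(prec n s)\<^sup>*\<^sup>* x y \<Longrightarrow> in_U x \<Longrightarrow> le_U x y"
proof (induction rule: converse_rtranclp_induct)
  case base
  then show ?case by (rule le_U_refl)
next
  case (step x y)
  then show ?case using le_U_prec_trans prec_in_U by blast
qed

lemma rtranclp_if_same_level_le:
  assumes "in_U x" "in_U y" "same_level_le x y"
  shows "(prec n s)\<^sup>*\<^sup>* x y"
proof -
  have via_Pd: "(prec n s)\<^sup>*\<^sup>* x (Pc m j)"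
    if "\<And>i. i \<le> N \<Longrightarrow> i \<noteq> k \<Longrightarrow> prec n s x (Pd m i)" "j \<le> N" for m k j
  proof -
    obtain i where "i \<le> N" "i \<noteq> k" "i \<noteq> j" using fresh_index by blast
    then have "prec n s x (Pd m i)" "prec n s (Pd m i) (Pc m j)"
      using that by (auto simp: prec_def)
    then show ?thesis by auto
  qed
  show ?thesis
  proof (cases x)
    case (Pa m)
    then show ?thesis using assms
      by (cases "sel s m") (auto simp: same_level_le_def prec_def intro: r_into_rtranclp)
  next
    case (Pb m)
    then show ?thesis using assms
      by (cases "sel s m") (auto simp: same_level_le_def prec_def intro: r_into_rtranclp)
  next
    case (Pd m k)
    then show ?thesis using assms by (auto simp: same_level_le_def prec_def intro: r_into_rtranclp)
  next
    case (Pea m k)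
    then show ?thesis using assms via_Pd[of k m]
      by (auto simp: same_level_le_def prec_def intro: r_into_rtranclp)
  next
    case (Peb m k)
    then show ?thesis using assms via_Pd[of k m]
      by (auto simp: same_level_le_def prec_def intro: r_into_rtranclp)
  qed (use assms in \<open>auto simp: same_level_le_def\<close>)
qed

lemma rtranclp_Pc_Suc:
  assumes "k \<le> N" "in_U y" "level y = m" "y \<noteq> Pea m k"
  shows "(prec n s)\<^sup>*\<^sup>* (Pc (Suc m) k) y"
proof -
  have via_eb: "(prec n s)\<^sup>*\<^sup>* (Pc (Suc m) k) y" if "i \<le> N" "same_level_le (Peb m i) y" for i
  proof -
    have "prec n s (Pc (Suc m) k) (Peb m i)" using that assms(1) by (auto simp: prec_def)
    moreover have "(prec n s)\<^sup>*\<^sup>* (Peb m i) y"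
      using that assms(2) by (intro rtranclp_if_same_level_le) auto
    ultimately show ?thesis by auto
  qed
  show ?thesis
  proof (cases y)
    case (Pa m')
    obtain j where "j \<le> N" "j \<noteq> k" using fresh_index by blast
    then have "prec n s (Pc (Suc m) k) (Pea m j)" "prec n s (Pea m j) y"
      using assms Pa by (auto simp: prec_def)
    then show ?thesis by auto
  next
    case (Pb m')
    then show ?thesis using assms by (intro via_eb[of 0]) (auto simp: same_level_le_def)
  next
    case (Pc m' j)
    then show ?thesis using assms by (intro via_eb[of 0]) (auto simp: same_level_le_def)
  next
    case (Pd m' j)
    obtain i where "i \<le> N" "i \<noteq> j" using fresh_index by blast
    then show ?thesis using Pd assms by (intro via_eb) (auto simp: same_level_le_def)
  next
    case (Pea m' j)
    then show ?thesis using assms by (auto simp: prec_def intro: r_into_rtranclp)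
  next
    case (Peb m' j)
    then show ?thesis using assms by (intro via_eb[of j]) (auto simp: same_level_le_def)
  qed (use assms in auto)
qed

lemma rtranclp_adjacent_level:
  assumes "in_U x" "in_U y" "level x = level y + 1"
    and "\<not> (\<exists>k. x = Pc (level x) k \<and> y = Pea (level y) k)"
  shows "(prec n s)\<^sup>*\<^sup>* x y"
proof (cases "\<exists>k. x = Pc (level x) k")
  case True
  then show ?thesis using assms rtranclp_Pc_Suc by auto
next
  case False
  define m where "m = level y"
  define e where "e = (case y of Pea _ j \<Rightarrow> j | _ \<Rightarrow> 0)"
  have "\<exists>j\<le>N. same_level_le x (Pc (Suc m) j) \<and> j \<noteq> e"
  proof (cases x)
    case (Pa m')
    obtain k1 k2 k3 where sel: "sel s (Suc m) = (k1, k2, k3)" by (cases "sel s (Suc m)")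
    then show ?thesis using Pa assms(3) sel_bounds[OF sel] m_def
      by (cases "k1 = e") (auto simp: same_level_le_def)
  next
    case (Pb m')
    obtain k1 k2 k3 where sel: "sel s (Suc m) = (k1, k2, k3)" by (cases "sel s (Suc m)")
    then show ?thesis using Pb assms(3) sel_bounds[OF sel] m_def
      by (cases "k1 = e") (auto simp: same_level_le_def)
  next
    case (Pd m' k)
    then show ?thesis using fresh_index[of k e e] assms(3) m_def by (auto simp: same_level_le_def)
  next
    case (Pea m' k)
    then show ?thesis using fresh_index[of e e e] assms(3) m_def by (auto simp: same_level_le_def)
  next
    case (Peb m' k)
    then show ?thesis using fresh_index[of e e e] assms(3) m_def by (auto simp: same_level_le_def)
  qed (use False assms(1) in auto)
  then obtain j where j: "j \<le> N" "same_level_le x (Pc (Suc m) j)" "j \<noteq> e" by blast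
  have "(prec n s)\<^sup>*\<^sup>* x (Pc (Suc m) j)"
    using j assms(1) by (intro rtranclp_if_same_level_le) auto
  moreover have "y \<noteq> Pea m j" using j(3) by (auto simp: e_def)
  then have "(prec n s)\<^sup>*\<^sup>* (Pc (Suc m) j) y"
    using j(1) assms(2) m_def by (intro rtranclp_Pc_Suc) auto
  ultimately show ?thesis by auto
qed

lemma rtranclp_distant_level:
  assumes "in_U x" "in_U y" "level y + 2 \<le> level x"
  shows "(prec n s)\<^sup>*\<^sup>* x y"
  using assms(1,3)
proof (induction "level x" arbitrary: x rule: less_induct)
  case less
  obtain j where j: "j \<le> N" "y \<noteq> Pea (level y) j"
    using fresh_index[of "case y of Pea _ i \<Rightarrow> i | _ \<Rightarrow> 0" 0 0] by (cases y) auto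
  let ?c = "Pc (level x - 1) j"
  have "(prec n s)\<^sup>*\<^sup>* x ?c"
    using less.prems j by (intro rtranclp_adjacent_level) auto
  moreover have "(prec n s)\<^sup>*\<^sup>* ?c y"
  proof (cases "level x = level y + 2")
    case True
    then show ?thesis using rtranclp_Pc_Suc[of j y] j assms(2) by (simp add: numeral_2_eq_2)
  next
    case False
    then show ?thesis using less.hyps[of ?c] less.prems j by auto
  qed
  ultimately show ?case by auto
qed

lemma rtranclp_if_le_U: "le_U x y \<Longrightarrow> (prec n s)\<^sup>*\<^sup>* x y"
  unfolding le_U_def
  using rtranclp_distant_level rtranclp_adjacent_level rtranclp_if_same_level_le by auto

lemma le_U_iff_rtranclp: "le_U x y \<longleftrightarrow> in_U x \<and> (prec n s)\<^sup>*\<^sup>* x y"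
  using rtranclp_if_le_U le_U_if_rtranclp le_U_def by blast

lemma leX_iff: "leX n s x y \<longleftrightarrow> (x = PBot \<and> y \<in> Xn n) \<or> le_U x y"
  unfolding leX_def Xn_eq using le_U_iff_rtranclp le_U_def by auto

lemma le_U_trans: "le_U x y \<Longrightarrow> le_U y z \<Longrightarrow> le_U x z"
  unfolding le_U_iff_rtranclp by auto

lemma rank_less_if_le_U:
  assumes "le_U x y" "x \<noteq> y"
  shows "rank y < rank x"
proof (cases "level y < level x")
  case True
  then show ?thesis using rank_level_bounds[of x] rank_level_bounds[of y] by linarith
next
  case False
  then have "same_level_le x y" using assms(1) by (auto simp: le_U_def)
  then show ?thesis using assms(2) by (cases x) (auto simp: same_level_le_def split: prod.splits)
qed

lemma rank_le_if_le_U: "le_U x y \<Longrightarrow> rank y \<le> rank x"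
  using rank_less_if_le_U by fastforce

lemma le_U_antisym:
  assumes "le_U x y" "le_U y x"
  shows "x = y"
proof (rule ccontr)
  assume "x \<noteq> y"
  then have "rank y < rank x" "rank x < rank y" using assms rank_less_if_le_U by auto
  then show False by simp
qed

lemma leX_trans: "leX n s x y \<Longrightarrow> leX n s y z \<Longrightarrow> leX n s x z"
  unfolding leX_iff using le_U_trans le_U_def Xn_eq by auto

lemma leX_refl: "x \<in> Xn n \<Longrightarrow> leX n s x x"
  by (simp add: leX_def)

lemma leX_bot: "y \<in> Xn n \<Longrightarrow> leX n s PBot y"
  by (simp add: leX_def Xn_def)

section \<open>The algebra of clopen upsets\<close>

lemma Xstar_simps [simp]:
  "hmeet (Xstar n s) = (\<inter>)" "hjoin (Xstar n s) = (\<union>)"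
  "himp (Xstar n s) = (\<lambda>U V. Xn n - downX n s (U - V))"
  "hbot (Xstar n s) = {}" "htop (Xstar n s) = Xn n"
  by (simp_all add: Xstar_def)

lemma carrier_Xstar_iff:
  "U \<in> hcar (Xstar n s) \<longleftrightarrow> upsetX n s U \<and> (U = Xn n \<or> finite U \<and> PBot \<notin> U)"
proof
  assume "U \<in> hcar (Xstar n s)"
  then have clopen: "clopenX n U" and up: "upsetX n s U" by (auto simp: Xstar_def)
  have sub: "U \<subseteq> Xn n" using up by (simp add: upsetX_def)
  show "upsetX n s U \<and> (U = Xn n \<or> finite U \<and> PBot \<notin> U)"
  proof (cases "PBot \<in> U")
    case True
    then have "Xn n \<subseteq> U" using up leX_bot by (auto simp: upsetX_def)
    then show ?thesis using sub up by auto
  next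
    case False
    then have "finite (Xn n - (Xn n - U))"
      using clopen by (auto simp: clopenX_def openX_def Xn_def)
    moreover have "Xn n - (Xn n - U) = U" using sub by auto
    ultimately show ?thesis using False up by auto
  qed
next
  assume U: "upsetX n s U \<and> (U = Xn n \<or> finite U \<and> PBot \<notin> U)"
  then have "Xn n - (Xn n - U) = U" by (auto simp: upsetX_def)
  then have "clopenX n U" using U by (auto simp: clopenX_def openX_def upsetX_def)
  then show "U \<in> hcar (Xstar n s)" using U by (simp add: Xstar_def)
qed

lemma upsetX_compl_downX: "upsetX n s (Xn n - downX n s S)"
  unfolding upsetX_def downX_def using leX_def leX_trans by blast

lemma upsetX_Int: "upsetX n s U \<Longrightarrow> upsetX n s V \<Longrightarrow> upsetX n s (U \<inter> V)"
  unfolding upsetX_def by blast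

lemma finite_compl_downX:
  assumes "in_U w"
  shows "finite (Xn n - downX n s {w})"
proof (rule finite_subset)
  show "Xn n - downX n s {w} \<subseteq> {z. in_U z \<and> rank z < 4 * (level w + 2)}"
  proof
    fix z assume z: "z \<in> Xn n - downX n s {w}"
    then have "\<not> leX n s z w" by (auto simp: downX_def)
    then have "in_U z" and "\<not> level w + 2 \<le> level z"
      using z assms leX_bot by (auto simp: leX_iff le_U_def Xn_eq)
    then show "z \<in> {z. in_U z \<and> rank z < 4 * (level w + 2)}"
      using rank_level_bounds(2)[of z] by auto
  qed
qed (rule finite_rank_less)

lemma exists_U_in_diff:
  assumes "U \<in> hcar (Xstar n s)" "V \<in> hcar (Xstar n s)" "U - V \<noteq> {}"
  shows "\<exists>w\<in>U - V. in_U w"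
proof (cases "PBot \<in> U - V")
  case True
  moreover have "PBot \<in> Xn n" by (simp add: Xn_def)
  ultimately have "U = Xn n" and "finite V" using assms(1,2) unfolding carrier_Xstar_iff by auto
  then obtain w where "in_U w" "w \<notin> V" using infinite_U by (metis mem_Collect_eq finite_subset subsetI)
  then show ?thesis using \<open>U = Xn n\<close> by (auto simp: Xn_eq)
next
  case False
  then show ?thesis using assms carrier_Xstar_iff by (auto simp: upsetX_def Xn_eq)
qed

lemma imp_in_carrier:
  assumes "U \<in> hcar (Xstar n s)" "V \<in> hcar (Xstar n s)"
  shows "Xn n - downX n s (U - V) \<in> hcar (Xstar n s)"
proof (cases "U - V = {}")
  case True
  then show ?thesis by (auto simp: carrier_Xstar_iff downX_def upsetX_def leX_def)
next
  case False
  then obtain w where w: "w \<in> U - V" "in_U w" using exists_U_in_diff assms by blast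
  then have "Xn n - downX n s (U - V) \<subseteq> Xn n - downX n s {w}" by (auto simp: downX_def)
  then have "finite (Xn n - downX n s (U - V))" using finite_compl_downX[OF w(2)] finite_subset by blast
  moreover have "PBot \<in> downX n s (U - V)" using w leX_bot by (auto simp: downX_def Xn_eq)
  ultimately show ?thesis using upsetX_compl_downX by (simp add: carrier_Xstar_iff)
qed

lemma is_alg_Xstar: "is_alg (Xstar n s)"
proof -
  have "{} \<in> hcar (Xstar n s)" "Xn n \<in> hcar (Xstar n s)"
    by (auto simp: carrier_Xstar_iff upsetX_def leX_def)
  moreover have "U \<inter> V \<in> hcar (Xstar n s)" "U \<union> V \<in> hcar (Xstar n s)"
    if "U \<in> hcar (Xstar n s)" "V \<in> hcar (Xstar n s)" for U V
    using that unfolding carrier_Xstar_iff upsetX_def by auto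
  ultimately show ?thesis unfolding is_alg_def using imp_in_carrier by auto
qed

definition up :: "pt \<Rightarrow> pt set" where
  "up x = {z. leX n s x z}"

lemma up_eq: "in_U x \<Longrightarrow> up x = {z. le_U x z}"
  by (auto simp: up_def leX_iff)

lemma finite_up:
  assumes "in_U x"
  shows "finite (up x)"
proof (rule finite_subset)
  show "up x \<subseteq> {z. in_U z \<and> rank z < Suc (rank x)}"
    using assms rank_le_if_le_U by (auto simp: up_eq le_U_def less_Suc_eq_le)
qed (rule finite_rank_less)

lemma up_in_carrier:
  assumes "in_U x"
  shows "up x \<in> hcar (Xstar n s)"
proof -
  have "upsetX n s (up x)"
    unfolding upsetX_def up_def using leX_def leX_trans by blast
  moreover have "PBot \<notin> up x" using assms by (simp add: up_eq le_U_def)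
  ultimately show ?thesis using finite_up[OF assms] by (simp add: carrier_Xstar_iff)
qed

lemma inj_on_up: "inj_on up {z. in_U z}"
proof (rule inj_onI)
  fix x y assume "x \<in> {z. in_U z}" "y \<in> {z. in_U z}" "up x = up y"
  then have "le_U x y" "le_U y x" using le_U_refl by (auto simp: up_eq)
  then show "x = y" by (rule le_U_antisym)
qed

lemma infinite_carrier: "infinite (hcar (Xstar n s))"
proof
  assume "finite (hcar (Xstar n s))"
  then have "finite (up ` {z. in_U z})"
    using up_in_carrier by (auto intro: finite_subset)
  then show False using inj_on_up infinite_U by (simp add: finite_image_iff)
qed

section \<open>Generation by n + 1 elements\<close>

definition generator :: "nat \<Rightarrow> pt set" where
  "generator i = {Pc 0 k | k. k \<le> N \<and> bit k i}"

definition generators :: "pt set set" where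
  "generators = generator ` {..n}"

abbreviation "Gen \<equiv> generated (Xstar n s) generators"

lemma leX_Pc0: "leX n s (Pc 0 k) y \<Longrightarrow> y = Pc 0 k"
  by (auto simp: leX_iff le_U_def same_level_le_def)

lemma up_Pc0: "k \<le> N \<Longrightarrow> up (Pc 0 k) = {Pc 0 k}"
  using leX_Pc0 leX_refl by (auto simp: up_def Xn_eq)

lemma generator_in_carrier: "generator i \<in> hcar (Xstar n s)"
proof -
  have "generator i \<subseteq> (\<lambda>k. Pc 0 k) ` {..N}" by (auto simp: generator_def)
  then have "finite (generator i)" by (rule finite_subset) simp
  moreover have "upsetX n s (generator i)"
    unfolding upsetX_def using leX_Pc0 by (auto simp: generator_def Xn_eq)
  ultimately show ?thesis by (auto simp: carrier_Xstar_iff generator_def)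
qed

lemma generators_subset_carrier: "generators \<subseteq> hcar (Xstar n s)"
  using generator_in_carrier by (auto simp: generators_def)

lemma card_generators: "card generators = n + 1"
proof -
  have "inj_on generator {..n}"
  proof (rule inj_onI)
    fix i i' assume "i \<in> {..n}" "generator i = generator i'"
    moreover have "Pc 0 (2 ^ i) \<in> generator i"
      using pow_le_N \<open>i \<in> {..n}\<close> by (simp add: generator_def bit_exp_iff)
    ultimately have "Pc 0 (2 ^ i) \<in> generator i'" by simp
    then show "i = i'" by (simp add: generator_def bit_exp_iff)
  qed
  then show ?thesis by (simp add: generators_def card_image)
qed

lemma Gen_closed:
  "{} \<in> Gen" "Xn n \<in> Gen"
  "U \<in> Gen \<Longrightarrow> V \<in> Gen \<Longrightarrow> U \<inter> V \<in> Gen"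
  "U \<in> Gen \<Longrightarrow> V \<in> Gen \<Longrightarrow> U \<union> V \<in> Gen"
  "U \<in> Gen \<Longrightarrow> V \<in> Gen \<Longrightarrow> Xn n - downX n s (U - V) \<in> Gen"
  using generated.intros[where A = "Xstar n s" and G = generators] by simp_all

lemma Gen_Union: "finite S \<Longrightarrow> (\<And>y. y \<in> S \<Longrightarrow> f y \<in> Gen) \<Longrightarrow> \<Union>(f ` S) \<in> Gen"
  by (induction S rule: finite_induct) (auto intro: Gen_closed)

lemma Gen_Inter: "finite S \<Longrightarrow> (\<And>y. y \<in> S \<Longrightarrow> f y \<in> Gen) \<Longrightarrow> Xn n \<inter> \<Inter>(f ` S) \<in> Gen"
proof (induction S rule: finite_induct)
  case (insert y S)
  have "Xn n \<inter> \<Inter>(f ` insert y S) = f y \<inter> (Xn n \<inter> \<Inter>(f ` S))" by auto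
  then show ?case using insert Gen_closed(3) by simp
qed (simp add: Gen_closed)

lemma finite_upset_in_Gen:
  assumes "finite S" "upsetX n s S" "\<And>y. y \<in> S \<Longrightarrow> up y \<in> Gen"
  shows "S \<in> Gen"
proof -
  have "S = \<Union>(up ` S)"
    using assms(2) leX_refl unfolding upsetX_def up_def by blast
  then show ?thesis using Gen_Union assms(1,3) by metis
qed

lemma compl_downX_in_Gen:
  assumes "in_U w" "up w \<in> Gen" "up w - {w} \<in> Gen"
  shows "Xn n - downX n s {w} \<in> Gen"
proof -
  have "up w - (up w - {w}) = {w}" using assms(1) le_U_refl by (auto simp: up_eq)
  then show ?thesis using Gen_closed(5)[OF assms(2,3)] by simp
qed

lemma below_Pc0:
  assumes "z \<in> Xn n" "\<forall>j. z \<noteq> Pc 0 j"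
  shows "\<exists>j. 0 < j \<and> j \<le> N \<and> leX n s z (Pc 0 j)"
proof (cases "z = PBot \<or> 0 < level z")
  case True
  then have "leX n s z (Pc 0 1)" using assms three_le_N by (auto simp: leX_iff le_U_def Xn_eq)
  then show ?thesis using three_le_N by auto
next
  case False
  then have z: "in_U z" "level z = 0" using assms(1) by (auto simp: Xn_eq)
  obtain j where j: "j \<le> N" "j \<noteq> 0" "\<forall>k. z = Pd 0 k \<longrightarrow> j \<noteq> k"
    using fresh_index[of 0 "case z of Pd _ k \<Rightarrow> k | _ \<Rightarrow> 0" 0] by (cases z) auto
  have "\<exists>j. 0 < j \<and> j \<le> N \<and> same_level_le z (Pc 0 j)"
  proof (cases z)
    case (Pa m)
    obtain k1 k2 k3 where sel: "sel s 0 = (k1, k2, k3)" by (cases "sel s 0")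
    then show ?thesis using Pa z sel_bounds[OF sel] by (cases "k1 = 0") (auto simp: same_level_le_def)
  next
    case (Pb m)
    obtain k1 k2 k3 where sel: "sel s 0 = (k1, k2, k3)" by (cases "sel s 0")
    then show ?thesis using Pb z sel_bounds[OF sel] by (cases "k1 = 0") (auto simp: same_level_le_def)
  qed (use z j assms(2) in \<open>auto simp: same_level_le_def\<close>)
  then show ?thesis using z by (auto simp: leX_iff le_U_def)
qed

lemma bit_pattern_singleton:
  assumes "k \<le> N"
  shows "{z \<in> Xn n. \<forall>i\<le>n. z \<in> (if bit k i then generator i else Xn n - downX n s (generator i))}
    = {Pc 0 k}" (is "?S = _")
proof
  have "Pc 0 k \<notin> downX n s (generator i)" if "\<not> bit k i" for i
    using that leX_Pc0 by (auto simp: downX_def generator_def)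
  then show "{Pc 0 k} \<subseteq> ?S" using assms by (auto simp: generator_def Xn_eq)
next
  have in_down: "z \<in> downX n s (generator i)" if "leX n s z (Pc 0 j)" "j \<le> N" "bit j i" for z i j
    using that by (auto simp: downX_def generator_def)
  show "?S \<subseteq> {Pc 0 k}"
  proof
    fix z assume z: "z \<in> ?S"
    show "z \<in> {Pc 0 k}"
    proof (cases "\<exists>j. z = Pc 0 j")
      case True
      then obtain j where j: "z = Pc 0 j" "j \<le> N" using z by (auto simp: Xn_eq)
      have "bit j i = bit k i" if "i < Suc n" for i
      proof -
        have "z \<in> (if bit k i then generator i else Xn n - downX n s (generator i))"
          using z that by simp
        then show ?thesis
          using in_down[of z j i] leX_refl[of z] z j by (cases "bit k i") (auto simp: generator_def)
      qed
      then have "j = k" using nat_eq_if_low_bits_eq[of j "Suc n" k] j(2) assms le_N_iff by blast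
      then show ?thesis using j by simp
    next
      case False
      then obtain j where j: "0 < j" "j \<le> N" "leX n s z (Pc 0 j)" using below_Pc0 z by blast
      then obtain i where i: "i < Suc n" "bit j i" using exists_low_bit[of j "Suc n"] le_N_iff by blast
      have "z \<in> downX n s (generator i)" "z \<notin> generator i"
        using in_down[OF j(3,2) i(2)] False by (auto simp: generator_def)
      moreover have "z \<in> (if bit k i then generator i else Xn n - downX n s (generator i))"
        using z i(1) by (simp add: less_Suc_eq_le)
      ultimately show ?thesis by (simp split: if_splits)
    qed
  qed
qed

lemma singleton_Pc0_in_Gen:
  assumes "k \<le> N"
  shows "{Pc 0 k} \<in> Gen"
proof -
  have "generator i \<in> Gen" if "i \<le> n" for i
    using that by (auto simp: generators_def intro: generated.gen_base)
  then have "(if bit k i then generator i else Xn n - downX n s (generator i)) \<in> Gen" if "i \<le> n" for i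
    using that Gen_closed(1) Gen_closed(5)[of "generator i" "{}"] by simp
  then have "Xn n \<inter> (\<Inter>i\<le>n. if bit k i then generator i else Xn n - downX n s (generator i)) \<in> Gen"
    by (intro Gen_Inter) auto
  moreover have "Xn n \<inter> (\<Inter>i\<le>n. if bit k i then generator i else Xn n - downX n s (generator i))
    = {z \<in> Xn n. \<forall>i\<le>n. z \<in> (if bit k i then generator i else Xn n - downX n s (generator i))}"
    by blast
  ultimately show ?thesis using bit_pattern_singleton[OF assms] by simp
qed

lemma upsetX_rank_less: "upsetX n s {z. in_U z \<and> rank z < r}"
  unfolding upsetX_def using rank_le_if_le_U by (fastforce simp: leX_iff le_U_def Xn_eq)

lemma strict_up_props:
  assumes "in_U x"
  shows "finite (up x - {x})" "upsetX n s (up x - {x})"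
    and "up x - {x} \<subseteq> {z. in_U z \<and> rank z < rank x}"
proof -
  show "finite (up x - {x})" using finite_up[OF assms] by simp
  show "upsetX n s (up x - {x})"
    unfolding upsetX_def
  proof (intro conjI ballI allI impI)
    show "up x - {x} \<subseteq> Xn n" by (auto simp: up_def leX_def)
    fix y z assume "y \<in> up x - {x}" "leX n s y z"
    then have "le_U x y" "y \<noteq> x" "le_U y z"
      using assms by (auto simp: up_eq leX_iff dest: le_U_in_U)
    then show "z \<in> up x - {x}"
      using assms le_U_trans le_U_antisym by (auto simp: up_eq)
  qed
  show "up x - {x} \<subseteq> {z. in_U z \<and> rank z < rank x}"
    using assms rank_less_if_le_U by (auto simp: up_eq le_U_def)
qed

lemma up_eq_Int_imp:
  assumes "upsetX n s T" "x \<in> T" "T \<subseteq> insert x R" "x \<notin> R" "in_U x"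
  shows "up x = T \<inter> (Xn n - downX n s (R - (up x - {x})))"
proof
  show "up x \<subseteq> T \<inter> (Xn n - downX n s (R - (up x - {x})))"
  proof
    fix z assume "z \<in> up x"
    then have xz: "leX n s x z" by (simp add: up_def)
    have "z \<notin> downX n s (R - (up x - {x}))"
    proof
      assume "z \<in> downX n s (R - (up x - {x}))"
      then obtain y where y: "y \<in> R" "y \<notin> up x - {x}" "leX n s z y" by (auto simp: downX_def)
      have "y \<in> up x" using leX_trans[OF xz y(3)] by (simp add: up_def)
      then show False using y assms(4) by auto
    qed
    moreover have "z \<in> T" using assms(1,2) xz by (auto simp: upsetX_def)
    moreover have "z \<in> Xn n" using xz by (simp add: leX_def)
    ultimately show "z \<in> T \<inter> (Xn n - downX n s (R - (up x - {x})))" by blast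
  qed
next
  show "T \<inter> (Xn n - downX n s (R - (up x - {x}))) \<subseteq> up x"
  proof
    fix z assume z: "z \<in> T \<inter> (Xn n - downX n s (R - (up x - {x})))"
    show "z \<in> up x"
    proof (cases "z = x")
      case True
      then show ?thesis using assms(5) leX_refl by (simp add: up_def Xn_eq)
    next
      case False
      then have "z \<in> R" using z assms(3) by blast
      moreover have "leX n s z z" using z leX_refl by blast
      ultimately have "z \<in> up x - {x}" using z by (auto simp: downX_def)
      then show ?thesis by blast
    qed
  qed
qed

definition separating_pair :: "pt \<Rightarrow> pt \<Rightarrow> pt \<Rightarrow> bool" where
  "separating_pair x w1 w2 \<longleftrightarrow> in_U w1 \<and> in_U w2 \<and> rank w1 < rank x \<and> rank w2 < rank x
     \<and> \<not> le_U x w1 \<and> \<not> le_U x w2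
     \<and> (\<forall>z. in_U z \<longrightarrow> rank x \<le> rank z \<longrightarrow> z \<noteq> x \<longrightarrow> le_U z w1 \<or> le_U z w2)"

lemma separating_pair_compl_downX:
  assumes "separating_pair x w1 w2" "in_U x"
  defines "T \<equiv> (Xn n - downX n s {w1}) \<inter> (Xn n - downX n s {w2})"
  shows "x \<in> T" "T \<subseteq> insert x {z. in_U z \<and> rank z < rank x}"
proof -
  have "\<not> leX n s x w1" "\<not> leX n s x w2"
    using assms(1,2) by (auto simp: separating_pair_def leX_iff)
  then show "x \<in> T" using assms(2) by (auto simp: T_def downX_def Xn_eq)
  show "T \<subseteq> insert x {z. in_U z \<and> rank z < rank x}"
  proof
    fix z assume "z \<in> T"
    then have "z \<in> Xn n" "\<not> leX n s z w1" "\<not> leX n s z w2" by (auto simp: T_def downX_def)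
    moreover have "in_U w1" using assms(1) by (simp add: separating_pair_def)
    ultimately have "in_U z" "\<not> le_U z w1" "\<not> le_U z w2" by (auto simp: leX_iff Xn_eq)
    then show "z \<in> insert x {z. in_U z \<and> rank z < rank x}"
      using assms(1) by (auto simp: separating_pair_def not_le)
  qed
qed

lemma separating_pairI:
  assumes "in_U w1" "in_U w2" "level w1 = level x" "\<forall>k. w1 \<noteq> Pea (level x) k"
    and "rank w1 < rank x" "rank w2 < rank x" "\<not> le_U x w1" "\<not> le_U x w2"
    and "\<And>z. in_U z \<Longrightarrow> level z = level x \<Longrightarrow> rank x \<le> rank z \<Longrightarrow> z \<noteq> x
      \<Longrightarrow> le_U z w1 \<or> le_U z w2"
  shows "separating_pair x w1 w2"
proof -
  have "le_U z w1 \<or> le_U z w2" if "in_U z" "rank x \<le> rank z" "z \<noteq> x" for z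
  proof (cases "level z = level x")
    case True
    then show ?thesis using assms(9) that by blast
  next
    case False
    then have "level x < level z" using level_le_if_rank_le[OF that(2)] by simp
    then show ?thesis using that(1) assms(1,3,4) by (auto simp: le_U_def)
  qed
  then show ?thesis using assms(1-8) unfolding separating_pair_def by blast
qed

lemma separating_pair_Pa:
  assumes "sel s m = (k1, k2, k3)" "k \<le> N" "k \<noteq> k1" "k \<noteq> k2" "k \<noteq> k3"
  shows "separating_pair (Pa m) (Pc m k) (Pc m k3)"
proof (rule separating_pairI)
  fix z assume "in_U z" "level z = level (Pa m)" "rank (Pa m) \<le> rank z" "z \<noteq> Pa m"
  then show "le_U z (Pc m k) \<or> le_U z (Pc m k3)"
    using assms sel_bounds[OF assms(1)] by (cases z) (auto simp: le_U_def same_level_le_def)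
qed (use assms sel_bounds[OF assms(1)] in \<open>auto simp: le_U_def same_level_le_def\<close>)

lemma separating_pair_Pb:
  assumes "sel s m = (k1, k2, k3)" "k \<le> N" "k \<noteq> k1" "k \<noteq> k2" "k \<noteq> k3"
  shows "separating_pair (Pb m) (Pc m k) (Pc m k2)"
proof (rule separating_pairI)
  fix z assume "in_U z" "level z = level (Pb m)" "rank (Pb m) \<le> rank z" "z \<noteq> Pb m"
  then show "le_U z (Pc m k) \<or> le_U z (Pc m k2)"
    using assms sel_bounds[OF assms(1)] by (cases z) (auto simp: le_U_def same_level_le_def)
qed (use assms sel_bounds[OF assms(1)] in \<open>auto simp: le_U_def same_level_le_def\<close>)

lemma separating_pair_Pc:
  assumes "k \<le> N"
  shows "separating_pair (Pc (Suc m) k) (Pea m k) (Pea m k)"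
proof -
  have "le_U z (Pea m k)" if "in_U z" "rank (Pc (Suc m) k) \<le> rank z" "z \<noteq> Pc (Suc m) k" for z
    using that level_le_if_rank_le[OF that(2)] assms by (cases z) (auto simp: le_U_def)
  then show ?thesis using assms by (auto simp: separating_pair_def le_U_def same_level_le_def)
qed

lemma separating_pair_Pd:
  assumes "k \<le> N"
  shows "separating_pair (Pd m k) (Pc m k) (Pc m k)"
proof (rule separating_pairI)
  fix z assume "in_U z" "level z = level (Pd m k)" "rank (Pd m k) \<le> rank z" "z \<noteq> Pd m k"
  then show "le_U z (Pc m k) \<or> le_U z (Pc m k)"
    using assms by (cases z) (auto simp: le_U_def same_level_le_def)
qed (use assms in \<open>auto simp: le_U_def same_level_le_def\<close>)

lemma separating_pair_Pea:
  assumes "k \<le> N"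
  shows "separating_pair (Pea m k) (Pd m k) (Pb m)"
proof (rule separating_pairI)
  fix z assume "in_U z" "level z = level (Pea m k)" "rank (Pea m k) \<le> rank z" "z \<noteq> Pea m k"
  then show "le_U z (Pd m k) \<or> le_U z (Pb m)"
    using assms by (cases z) (auto simp: le_U_def same_level_le_def)
qed (use assms in \<open>auto simp: le_U_def same_level_le_def\<close>)

lemma separating_pair_Peb:
  assumes "k \<le> N"
  shows "separating_pair (Peb m k) (Pd m k) (Pa m)"
proof (rule separating_pairI)
  fix z assume "in_U z" "level z = level (Peb m k)" "rank (Peb m k) \<le> rank z" "z \<noteq> Peb m k"
  then show "le_U z (Pd m k) \<or> le_U z (Pa m)"
    using assms by (cases z) (auto simp: le_U_def same_level_le_def)
qed (use assms in \<open>auto simp: le_U_def same_level_le_def\<close>)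

lemma exists_separating_pair:
  assumes "in_U x" "\<forall>k. x \<noteq> Pc 0 k"
  shows "\<exists>w1 w2. separating_pair x w1 w2"
proof (cases x)
  case (Pa m)
  obtain k1 k2 k3 where "sel s m = (k1, k2, k3)" by (cases "sel s m")
  moreover obtain k where "k \<le> N" "k \<noteq> k1" "k \<noteq> k2" "k \<noteq> k3" using fresh_index by blast
  ultimately show ?thesis using Pa separating_pair_Pa by blast
next
  case (Pb m)
  obtain k1 k2 k3 where "sel s m = (k1, k2, k3)" by (cases "sel s m")
  moreover obtain k where "k \<le> N" "k \<noteq> k1" "k \<noteq> k2" "k \<noteq> k3" using fresh_index by blast
  ultimately show ?thesis using Pb separating_pair_Pb by blast
next
  case (Pc m k)
  then obtain m' where "m = Suc m'" using assms(2) by (cases m) auto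
  then show ?thesis using Pc assms(1) separating_pair_Pc by auto
qed (use assms in \<open>auto intro: separating_pair_Pd separating_pair_Pea separating_pair_Peb\<close>)

lemma up_in_Gen: "in_U x \<Longrightarrow> up x \<in> Gen"
proof (induction "rank x" arbitrary: x rule: less_induct)
  case less
  define R where "R = {z. in_U z \<and> rank z < rank x}"
  have upset_in_Gen: "S \<in> Gen" if "finite S" "upsetX n s S" "S \<subseteq> R" for S
  proof (rule finite_upset_in_Gen[OF that(1,2)])
    fix y assume "y \<in> S"
    then have "in_U y" "rank y < rank x" using that(3) by (auto simp: R_def)
    then show "up y \<in> Gen" using less.hyps by blast
  qed
  have strict_up_in_Gen: "up w - {w} \<in> Gen" if "in_U w" "rank w \<le> rank x" for w
    using that strict_up_props[OF that(1)] by (intro upset_in_Gen) (auto simp: R_def)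
  show ?case
  proof (cases "\<exists>k. x = Pc 0 k")
    case True
    then show ?thesis using less.prems up_Pc0 singleton_Pc0_in_Gen by auto
  next
    case False
    then obtain w1 w2 where sep: "separating_pair x w1 w2"
      using exists_separating_pair less.prems by blast
    let ?T = "(Xn n - downX n s {w1}) \<inter> (Xn n - downX n s {w2})"
    have "upsetX n s ?T" by (intro upsetX_Int upsetX_compl_downX)
    then have up_eq: "up x = ?T \<inter> (Xn n - downX n s (R - (up x - {x})))"
      using separating_pair_compl_downX[OF sep less.prems] less.prems
      by (intro up_eq_Int_imp) (auto simp: R_def)
    have "Xn n - downX n s {w} \<in> Gen" if "in_U w" "rank w < rank x" for w
      using that less.hyps strict_up_in_Gen by (intro compl_downX_in_Gen) simp_all
    then have "?T \<in> Gen" using sep Gen_closed(3) by (simp add: separating_pair_def)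
    moreover have "R \<in> Gen"
      using finite_rank_less upsetX_rank_less by (intro upset_in_Gen) (auto simp: R_def)
    moreover have "up x - {x} \<in> Gen" using less.prems strict_up_in_Gen by blast
    ultimately have "?T \<inter> (Xn n - downX n s (R - (up x - {x}))) \<in> Gen"
      by (rule Gen_closed(3)[OF _ Gen_closed(5)])
    then show ?thesis by (subst up_eq)
  qed
qed

lemma Gen_eq_carrier: "Gen = hcar (Xstar n s)"
proof
  show "Gen \<subseteq> hcar (Xstar n s)"
    using generated_subset_carrier is_alg_Xstar generators_subset_carrier by blast
  show "hcar (Xstar n s) \<subseteq> Gen"
  proof
    fix U assume U: "U \<in> hcar (Xstar n s)"
    show "U \<in> Gen"
    proof (cases "U = Xn n")
      case True
      then show ?thesis using Gen_closed(2) by simp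
    next
      case False
      then have fin: "finite U" and up: "upsetX n s U" and "PBot \<notin> U"
        using U by (auto simp: carrier_Xstar_iff)
      then have "in_U y" if "y \<in> U" for y
        using that by (auto simp: upsetX_def Xn_eq)
      then show ?thesis using finite_upset_in_Gen[OF fin up] up_in_Gen by blast
    qed
  qed
qed

end

theorem mainTheorem7:
  fixes n :: nat and s :: "(nat \<times> nat \<times> nat) list"
  assumes "n \<ge> 2" and "distinct s" and "set s = Tn n"
  shows "infinite (hcar (Xstar n s))
         \<and> (\<exists>G. G \<subseteq> hcar (Xstar n s) \<and> card G = n + 1
                 \<and> generated (Xstar n s) G = hcar (Xstar n s))
         \<and> \<not> variety_locally_finite (Xstar n s)"
proof -
  \<comment> \<open>the enumeration need not be injective: only its set of values matters\<close>
  interpret abomination n s using assms(1,3) by unfold_locales auto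
  have "finitely_generated (Xstar n s)"
    unfolding finitely_generated_def using Gen_eq_carrier generators_subset_carrier
    by (intro exI[of _ generators]) (simp add: generators_def)
  moreover have "in_variety (Xstar n s) (Xstar n s)"
    using is_alg_Xstar by (simp add: in_variety_def)
  ultimately have "\<not> variety_locally_finite (Xstar n s)"
    unfolding variety_locally_finite_def using infinite_carrier by blast
  then show ?thesis
    using infinite_carrier generators_subset_carrier card_generators Gen_eq_carrier by blast
qed

end
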